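(* Assume (A1)–(A4). There is a constant $K$ independent of $N$ such that $$\mathbb E\Big[\sup_{0\le t\le T}\big|\Phi(t,\bar x^{(N)}(t))-\Psi_N(t,\bar x^{(N)}(t))\big|^2\Big]\le\frac K{N^2}.$$
   Context: For each $N\ge1$: on a complete filtered probability space, $W^0,W_1,\dots,W_N$ are independent 1-d Brownian motions; filtration generated by them and an independent $\mathcal F_0$. Data (independent of $N$): $T>0$, real constants $A,B,Q,R,G,\sigma,\sigma_0$, $a,b,q,r,g:\mathbb R\to\mathbb R$; primes denote derivatives. (A1) $Q,R,G,\sigma\ge0$, $\sigma_0>0$, $R>0$; $a,b,q,r,g$ bounded $C^2$ with bounded first and second derivatives. (A2) $\xi_1,\dots,\xi_N$ i.i.d., $\mathcal F_0$-measurable, fixed common law with finite second moment. (A3) $\exists\varepsilon_0>0$: $|R+\tfrac12r''(v)+yb''(v)|\ge\varepsilon_0$ for all $v,y$. $\rho$: the $C^1$ function with bounded derivative with $R\rho(y)+\tfrac12r'(\rho(y))+(B+b'(\rho(y)))y=0$. $P\ge0$ solves $\dot P+2AP+Q-R^{-1}B^2P^2=0$, $P(T)=G$. (A4) $a'(v)P(t)\ge R^{-1}Bb'(v)P(t)^2$, $B^2+Bb'(v)\ge0$ for all $t,v$. $k(t,x,y):=\rho(P(t)x+y)$, $\tilde b(t,x,y):=b(k(t,x,y))$. For $\theta\ge0$ let $\mathcal L_\theta$ denote the PDE $\partial_tF+\partial_xF[Ax+a(x)+Bk(t,x,F)+\tilde b(t,x,F)]+P(t)[a(x)+R^{-1}B^2P(t)x+Bk(t,x,F)+\tilde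 b(t,x,F)+a'(x)x]+\tfrac12(\theta+\sigma_0^2)\partial_{xx}F+\tfrac12q'(x)+(A+a'(x))F=0$ on $[0,T)\times\mathbb R$, $F(T,x)=\tfrac12g'(x)$. $\Phi$ is the unique $C^{1,2}$ solution of $\mathcal L_0$ with bounded $\partial_x\Phi,\partial_{xx}\Phi$; $\Psi_N$ is the unique $C^{1,2}$ solution of $\mathcal L_{\sigma^2/N}$ with bounded $\partial_x\Psi_N,\partial_{xx}\Psi_N$. $\bar x^{(N)}$ is the forward component of the uniquely solvable FBSDE (HN): $d\bar x^{(N)}=\{A\bar x^{(N)}+a(\bar x^{(N)})+Bk(t,\bar x^{(N)},\psi)+\tilde b(t,\bar x^{(N)},\psi)\}dt+\frac{\sigma}{N}\sum_idW_i+\sigma_0dW^0$, $\bar x^{(N)}(0)=\frac1N\sum_i\xi_i$; $d\psi=-\{P(t)[a(\bar x^{(N)})+R^{-1}B^2P(t)\bar x^{(N)}+Bk(t,\bar x^{(N)},\psi)+\tilde b(t,\bar x^{(N)},\psi)+a'(\bar x^{(N)})\bar x^{(N)}]+\tfrac12q'(\bar x^{(N)})+(A+a'(\bar x^{(N)}))\psi\}dt+\sum_j\Upsilon_jdW_j+\Upsilon_0dW^0$, $\psi(T)=\tfrac12g'(\bar x^{(N)}(T))$; one has $\psi(t)=\Psi_N(t,\bar x^{(N)}(t))$. *)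

theory Defs
  imports "HOL-Probability.Probability"
begin

definition bdd_C2 :: "(real \<Rightarrow> real) \<Rightarrow> bool" where
  "bdd_C2 f \<longleftrightarrow> (\<forall>x. f differentiable (at x)) \<and> (\<forall>x. deriv f differentiable (at x))
     \<and> continuous_on UNIV (deriv (deriv f))
     \<and> bounded (range f) \<and> bounded (range (deriv f)) \<and> bounded (range (deriv (deriv f)))"

definition kfun :: "(real \<Rightarrow> real) \<Rightarrow> (real \<Rightarrow> real) \<Rightarrow> real \<Rightarrow> real \<Rightarrow> real \<Rightarrow> real" where
  "kfun \<rho> P t x y = \<rho> (P t * x + y)"

definition driftF :: "real \<Rightarrow> real \<Rightarrow> (real \<Rightarrow> real) \<Rightarrow> (real \<Rightarrow> real) \<Rightarrow> (real \<Rightarrow> real)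
    \<Rightarrow> (real \<Rightarrow> real) \<Rightarrow> real \<Rightarrow> real \<Rightarrow> real \<Rightarrow> real" where
  "driftF A B a b \<rho> P t x y = A * x + a x + B * kfun \<rho> P t x y + b (kfun \<rho> P t x y)"

definition sourceF :: "real \<Rightarrow> real \<Rightarrow> real \<Rightarrow> (real \<Rightarrow> real) \<Rightarrow> (real \<Rightarrow> real) \<Rightarrow> (real \<Rightarrow> real)
    \<Rightarrow> (real \<Rightarrow> real) \<Rightarrow> (real \<Rightarrow> real) \<Rightarrow> real \<Rightarrow> real \<Rightarrow> real \<Rightarrow> real" where
  "sourceF A B R a b q \<rho> P t x y =
     P t * (a x + B\<^sup>2 / R * P t * x + B * kfun \<rho> P t x y + b (kfun \<rho> P t x y) + deriv a x * x)
     + deriv q x / 2 + (A + deriv a x) * y"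

definition pde_sol :: "real \<Rightarrow> real \<Rightarrow> real \<Rightarrow> (real \<Rightarrow> real \<Rightarrow> real \<Rightarrow> real)
    \<Rightarrow> (real \<Rightarrow> real \<Rightarrow> real \<Rightarrow> real) \<Rightarrow> (real \<Rightarrow> real) \<Rightarrow> (real \<Rightarrow> real \<Rightarrow> real) \<Rightarrow> bool" where
  "pde_sol T \<sigma>0 \<theta> dr src g F \<longleftrightarrow>
    (\<exists>Ft Fx Fxx.
      (\<forall>t\<in>{0..<T}. \<forall>x.
          ((\<lambda>s. F s x) has_real_derivative Ft t x) (at t within {0..T})
        \<and> ((\<lambda>y. F t y) has_real_derivative Fx t x) (at x)
        \<and> ((\<lambda>y. Fx t y) has_real_derivative Fxx t x) (at x))
      \<and> continuous_on ({0..T} \<times> UNIV) (\<lambda>p. F (fst p) (snd p))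
      \<and> continuous_on ({0..<T} \<times> UNIV) (\<lambda>p. Ft (fst p) (snd p))
      \<and> continuous_on ({0..<T} \<times> UNIV) (\<lambda>p. Fx (fst p) (snd p))
      \<and> continuous_on ({0..<T} \<times> UNIV) (\<lambda>p. Fxx (fst p) (snd p))
      \<and> bounded ((\<lambda>p. Fx (fst p) (snd p)) ` ({0..<T} \<times> UNIV))
      \<and> bounded ((\<lambda>p. Fxx (fst p) (snd p)) ` ({0..<T} \<times> UNIV))
      \<and> (\<forall>t\<in>{0..<T}. \<forall>x.
          Ft t x + Fx t x * dr t x (F t x) + src t x (F t x) + (\<theta> + \<sigma>0\<^sup>2) / 2 * Fxx t x = 0)
      \<and> (\<forall>x. F T x = deriv g x / 2))"

definition brownian_motion :: "'a measure \<Rightarrow> (real \<Rightarrow> 'a \<Rightarrow> real) \<Rightarrow> bool" where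
  "brownian_motion M W \<longleftrightarrow>
     (\<forall>t\<ge>0. W t \<in> borel_measurable M)
   \<and> (\<forall>\<omega>\<in>space M. W 0 \<omega> = 0 \<and> continuous_on {0..} (\<lambda>t. W t \<omega>))
   \<and> (\<forall>s t. 0 \<le> s \<and> s < t \<longrightarrow>
        distributed M lborel (\<lambda>\<omega>. W t \<omega> - W s \<omega>) (normal_density 0 (sqrt (t - s))))
   \<and> (\<forall>(n::nat) ts. 0 \<le> ts 0 \<and> (\<forall>i<n. ts i < ts (Suc i)) \<longrightarrow>
        prob_space.indep_vars M (\<lambda>_. borel) (\<lambda>i \<omega>. W (ts (Suc i)) \<omega> - W (ts i) \<omega>) {..<n})"

definition proc_sigma :: "'a measure \<Rightarrow> (real \<Rightarrow> 'a \<Rightarrow> real) \<Rightarrow> 'a set set" where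
  "proc_sigma M W = sigma_sets (space M) (\<Union>t\<in>{0..}. {W t -` A \<inter> space M | A. A \<in> sets borel})"

definition rv_sigma :: "'a measure \<Rightarrow> ('a \<Rightarrow> real) \<Rightarrow> 'a set set" where
  "rv_sigma M X = sigma_sets (space M) {X -` A \<inter> space M | A. A \<in> sets borel}"

end

theory Submission
  imports Defs
begin

text \<open>
  The bound holds pathwise, not only in mean square.
  \<open>\<Phi>\<close> and \<open>\<Psi>\<^sub>N\<close> solve the same quasilinear parabolic equation and differ only in the
  viscosity, \<open>\<sigma>\<^sup>2/N\<close>. Their difference \<open>U\<close> therefore satisfies a linear parabolic inequality
  whose drift and zero-order coefficients, being Lipschitz in the unknown, contribute only
  \<open>L \<bar>U\<bar>\<close>, and whose sole inhomogeneity is \<open>\<sigma>\<^sup>2/(2N) \<partial>\<^sub>x\<^sub>x\<Phi> = O(1/N)\<close>.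
  A maximum principle on \<open>[0,T] \<times> \<real>\<close> (with an exponential weight in time and a vanishing
  quadratic penalty in space, which makes suprema attained) then gives
  \<open>sup \<bar>\<Phi> - \<Psi>\<^sub>N\<bar> \<le> K/N\<close> uniformly, and the expected supremum along any path is at most \<open>K\<^sup>2/N\<^sup>2\<close>.
\<close>

lemma abs_diff_le_of_deriv_bound:
  fixes f f' :: "real \<Rightarrow> real"
  assumes "\<And>x. (f has_real_derivative f' x) (at x)" and "\<And>x. \<bar>f' x\<bar> \<le> K"
  shows "\<bar>f x - f y\<bar> \<le> K * \<bar>x - y\<bar>"
  using field_differentiable_bound[of UNIV f f' K x y] assms
  by (auto simp: has_field_derivative_at_within)

lemma has_real_derivative_nonpos_at_left_max:
  fixes h :: "real \<Rightarrow> real"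
  assumes deriv: "(h has_real_derivative D) (at t0 within {0..T})" and "0 \<le> t0" "t0 < T"
    and max: "\<And>t. t \<in> {t0..T} \<Longrightarrow> h t \<le> h t0"
  shows "D \<le> 0"
proof -
  have "(h has_real_derivative D) (at t0 within {t0..T})"
    using has_field_derivative_subset[OF deriv] \<open>0 \<le> t0\<close> by auto
  then have lim: "((\<lambda>t. (h t - h t0) / (t - t0)) \<longlongrightarrow> D) (at_right t0)"
    using has_field_derivative_iff at_within_Icc_at_right[OF \<open>t0 < T\<close>] by metis
  have "eventually (\<lambda>t. (h t - h t0) / (t - t0) \<le> 0) (at_right t0)"
    unfolding eventually_at_right[OF \<open>t0 < T\<close>]
    using max \<open>t0 < T\<close> by (intro exI[of _ T]) (auto simp: divide_nonpos_pos)
  then show ?thesis by (rule tendsto_upperbound[OF lim]) simp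
qed

lemma second_deriv_nonpos_at_max:
  fixes g g' :: "real \<Rightarrow> real"
  assumes dg: "\<And>x. (g has_real_derivative g' x) (at x)"
    and dg': "(g' has_real_derivative l) (at x0)" and crit: "g' x0 = 0"
    and max: "\<And>x. g x \<le> g x0"
  shows "l \<le> 0"
proof (rule ccontr)
  assume "\<not> l \<le> 0"
  then obtain d where "d > 0" and incr: "\<And>h. h > 0 \<Longrightarrow> h < d \<Longrightarrow> g' x0 < g' (x0 + h)"
    using DERIV_pos_inc_right[OF dg'] by force
  then obtain z where z: "x0 < z" "z < x0 + d/2" "g (x0 + d/2) - g x0 = d/2 * g' z"
    using MVT2[of x0 "x0 + d/2" g g'] dg by auto
  have "g' z > 0" using incr[of "z - x0"] z crit by auto
  then have "d/2 * g' z > 0" using \<open>d > 0\<close> by simp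
  then have "g (x0 + d/2) > g x0" using z(3) by linarith
  then show False using max[of "x0 + d/2"] by simp
qed

lemma continuous_slice_affine_bound:
  fixes F Fx :: "real \<Rightarrow> real \<Rightarrow> real"
  assumes cont: "continuous_on ({0..T} \<times> UNIV) (\<lambda>p. F (fst p) (snd p))"
    and deriv: "\<And>t x. t \<in> {0..<T} \<Longrightarrow> ((\<lambda>y. F t y) has_real_derivative Fx t x) (at x)"
    and bound: "\<And>t x. t \<in> {0..<T} \<Longrightarrow> \<bar>Fx t x\<bar> \<le> C"
  obtains C0 where "C0 \<ge> 0" "\<And>t x. t \<in> {0..<T} \<Longrightarrow> \<bar>F t x\<bar> \<le> C0 + C * \<bar>x\<bar>"
proof -
  have "continuous_on {0..T} (\<lambda>t. (\<lambda>p. F (fst p) (snd p)) (t, 0))"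
    by (rule continuous_on_compose2[OF cont]) (auto intro!: continuous_intros)
  then have "bounded ((\<lambda>t. F t 0) ` {0..T})"
    by (intro compact_imp_bounded compact_continuous_image) auto
  then obtain C0 where C0: "\<forall>t\<in>{0..T}. \<bar>F t 0\<bar> \<le> C0" by (auto simp: bounded_iff)
  have "\<bar>F t x\<bar> \<le> max C0 0 + C * \<bar>x\<bar>" if t: "t \<in> {0..<T}" for t x
  proof -
    have "\<bar>F t x - F t 0\<bar> \<le> C * \<bar>x - 0\<bar>"
      by (intro abs_diff_le_of_deriv_bound[of "F t" "Fx t"] deriv bound t)
    then show ?thesis using C0 t by force
  qed
  then show ?thesis by (intro that[of "max C0 0"]) auto
qed

locale parabolic_subsolution =
  fixes T \<nu> L c Cb Cx :: real
    and U Ut Ux Uxx \<beta> :: "real \<Rightarrow> real \<Rightarrow> real"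
  assumes T_pos: "T > 0" and \<nu>_nonneg: "\<nu> \<ge> 0" and L_nonneg: "L \<ge> 0"
    and c_nonneg: "c \<ge> 0" and Cb_nonneg: "Cb \<ge> 0"
    and U_time_deriv:
      "\<And>t x. t \<in> {0..<T} \<Longrightarrow> ((\<lambda>s. U s x) has_real_derivative Ut t x) (at t within {0..T})"
    and U_space_deriv: "\<And>t x. t \<in> {0..<T} \<Longrightarrow> ((\<lambda>y. U t y) has_real_derivative Ux t x) (at x)"
    and Ux_space_deriv: "\<And>t x. t \<in> {0..<T} \<Longrightarrow> ((\<lambda>y. Ux t y) has_real_derivative Uxx t x) (at x)"
    and U_cont: "continuous_on ({0..T} \<times> UNIV) (\<lambda>p. U (fst p) (snd p))"
    and Ux_bound: "\<And>t x. t \<in> {0..<T} \<Longrightarrow> \<bar>Ux t x\<bar> \<le> Cx"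
    and U_terminal: "\<And>x. U T x \<le> 0"
    and \<beta>_growth: "\<And>t x. t \<in> {0..<T} \<Longrightarrow> \<bar>\<beta> t x\<bar> \<le> Cb * (1 + \<bar>x\<bar>)"
    and subsolution:
      "\<And>t x. t \<in> {0..<T} \<Longrightarrow> Ut t x + Ux t x * \<beta> t x + \<nu> / 2 * Uxx t x + L * \<bar>U t x\<bar> \<ge> - c"
begin

definition barrier :: "real \<Rightarrow> real" where
  "barrier t = c * (T - t + 1) * exp (L * (T - t))"

definition rate :: real where
  "rate = 4 * Cb + \<nu> + L + 1"

text \<open>The quadratic penalty makes the supremum over the unbounded space variable attained;
  its exponential time weight is fast enough to absorb drift and diffusion acting on it.\<close>

definition penalized :: "real \<Rightarrow> real \<Rightarrow> real \<Rightarrow> real" where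
  "penalized \<delta> t x = U t x - barrier t - \<delta> * exp (rate * (T - t)) * (1 + x\<^sup>2)"

lemma barrier_nonneg: "t \<le> T \<Longrightarrow> barrier t \<ge> 0"
  using c_nonneg by (simp add: barrier_def)

lemma barrier_deriv:
  "(barrier has_real_derivative (- c * exp (L * (T - t)) - L * barrier t)) (at t)"
  unfolding barrier_def by (rule derivative_eq_intros refl | simp add: algebra_simps)+

lemma rate_pos: "rate > 0"
  using Cb_nonneg \<nu>_nonneg L_nonneg by (simp add: rate_def)

lemma U_linear_growth:
  obtains Cu where "\<And>s y. s \<in> {0..T} \<Longrightarrow> U s y \<le> Cu + Cx * \<bar>y\<bar>"
proof -
  obtain Cu where "Cu \<ge> 0" and Cu: "\<And>s y. s \<in> {0..<T} \<Longrightarrow> \<bar>U s y\<bar> \<le> Cu + Cx * \<bar>y\<bar>"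
    using continuous_slice_affine_bound[OF U_cont U_space_deriv Ux_bound] by blast
  have "Cx \<ge> 0" using Ux_bound[of 0 0] T_pos by auto
  have "U s y \<le> Cu + Cx * \<bar>y\<bar>" if "s \<in> {0..T}" for s y
  proof (cases "s = T")
    case True
    have "Cx * \<bar>y\<bar> \<ge> 0" using \<open>Cx \<ge> 0\<close> by simp
    then show ?thesis using True U_terminal[of y] \<open>Cu \<ge> 0\<close> by simp
  next
    case False
    then show ?thesis using Cu[of s y] that by force
  qed
  then show ?thesis by (rule that)
qed

lemma penalized_neg_at_infinity:
  assumes "\<delta> > 0"
  obtains R0 where "\<And>t x. t \<in> {0..T} \<Longrightarrow> \<bar>x\<bar> > R0 \<Longrightarrow> penalized \<delta> t x < 0"
proof -
  obtain Cu where Cu: "\<And>s y. s \<in> {0..T} \<Longrightarrow> U s y \<le> Cu + Cx * \<bar>y\<bar>"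
    using U_linear_growth by blast
  define R0 where "R0 = max 1 ((\<bar>Cu\<bar> + \<bar>Cx\<bar>) / \<delta>)"
  have "penalized \<delta> t x < 0" if t: "t \<in> {0..T}" and x: "\<bar>x\<bar> > R0" for t x
  proof -
    have "1 \<le> exp (rate * (T - t))" using rate_pos t by simp
    then have "\<delta> * 1 * (1 + x\<^sup>2) \<le> \<delta> * exp (rate * (T - t)) * (1 + x\<^sup>2)"
      using \<open>\<delta> > 0\<close> by (intro mult_right_mono mult_left_mono) auto
    moreover have "\<delta> * \<bar>x\<bar> > \<bar>Cu\<bar> + \<bar>Cx\<bar>"
      using x \<open>\<delta> > 0\<close> by (simp add: R0_def field_simps)
    then have "\<delta> * \<bar>x\<bar> * \<bar>x\<bar> > (\<bar>Cu\<bar> + \<bar>Cx\<bar>) * \<bar>x\<bar>"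
      using x by (intro mult_strict_right_mono) (auto simp: R0_def)
    then have "\<delta> * x\<^sup>2 > \<bar>Cu\<bar> * \<bar>x\<bar> + \<bar>Cx\<bar> * \<bar>x\<bar>"
      by (simp add: power2_eq_square algebra_simps)
    moreover have "\<bar>Cu\<bar> * 1 \<le> \<bar>Cu\<bar> * \<bar>x\<bar>" using x by (intro mult_left_mono) (auto simp: R0_def)
    moreover have "Cx * \<bar>x\<bar> \<le> \<bar>Cx\<bar> * \<bar>x\<bar>" by (simp add: mult_right_mono)
    ultimately show ?thesis
      using Cu[OF t, of x] barrier_nonneg[of t] t \<open>\<delta> > 0\<close> abs_ge_self[of Cu]
      unfolding penalized_def by (simp add: distrib_left)
  qed
  then show ?thesis by (rule that)
qed

lemma penalized_cont:
  "continuous_on ({0..T} \<times> UNIV) (\<lambda>p. penalized \<delta> (fst p) (snd p))"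
  unfolding penalized_def barrier_def by (intro continuous_intros U_cont)

lemma penalized_max_attained:
  assumes "\<delta> > 0" "s \<in> {0..T}" "penalized \<delta> s y > 0"
  obtains t0 x0 where "t0 \<in> {0..<T}" "penalized \<delta> t0 x0 > 0"
    "\<And>t x. t \<in> {0..T} \<Longrightarrow> exp (L * t) * penalized \<delta> t x \<le> exp (L * t0) * penalized \<delta> t0 x0"
proof -
  obtain R0 where far: "\<And>t x. t \<in> {0..T} \<Longrightarrow> \<bar>x\<bar> > R0 \<Longrightarrow> penalized \<delta> t x < 0"
    using penalized_neg_at_infinity[OF \<open>\<delta> > 0\<close>] by blast
  define R where "R = max R0 \<bar>y\<bar>"
  define S where "S = {0..T} \<times> {-R..R}"
  define Z where "Z p = exp (L * fst p) * penalized \<delta> (fst p) (snd p)" for p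
  have "continuous_on S Z"
    unfolding Z_def S_def
    by (intro continuous_intros continuous_on_subset[OF penalized_cont]) auto
  moreover have "compact S" unfolding S_def by (intro compact_Times compact_Icc)
  moreover have sy: "(s, y) \<in> S" using assms(2) by (auto simp: S_def R_def)
  ultimately obtain t0 x0 where p0: "(t0, x0) \<in> S" and max_S: "\<And>p. p \<in> S \<Longrightarrow> Z p \<le> Z (t0, x0)"
    using continuous_attains_sup[of S Z] by fastforce
  have "Z (s, y) > 0" using assms(3) by (simp add: Z_def)
  then have Z0: "Z (t0, x0) > 0" using max_S[OF sy] by simp
  then have W0: "penalized \<delta> t0 x0 > 0" by (simp add: Z_def zero_less_mult_iff)
  have max: "Z (t, x) \<le> Z (t0, x0)" if t: "t \<in> {0..T}" for t x
  proof (cases "\<bar>x\<bar> \<le> R")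
    case True
    then show ?thesis using max_S[of "(t, x)"] t by (auto simp: S_def abs_le_iff)
  next
    case False
    then have "Z (t, x) < 0" using far[OF t] by (simp add: Z_def R_def mult_pos_neg)
    then show ?thesis using Z0 by simp
  qed
  have "\<delta> * (1 + x0\<^sup>2) > 0" using \<open>\<delta> > 0\<close> by (simp add: add_pos_nonneg)
  then have "penalized \<delta> T x0 < 0"
    using U_terminal[of x0] barrier_nonneg[of T] by (simp add: penalized_def)
  then have "t0 \<noteq> T" using W0 by auto
  then have "t0 \<in> {0..<T}" using p0 by (auto simp: S_def)
  with W0 max show ?thesis by (intro that) (auto simp: Z_def)
qed

lemma penalized_space_max:
  assumes t0: "t0 \<in> {0..<T}" and max: "\<And>x. penalized \<delta> t0 x \<le> penalized \<delta> t0 x0"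
  shows "Ux t0 x0 = 2 * \<delta> * exp (rate * (T - t0)) * x0"
    and "Uxx t0 x0 \<le> 2 * \<delta> * exp (rate * (T - t0))"
proof -
  define E where "E = exp (rate * (T - t0))"
  have d: "((\<lambda>x. penalized \<delta> t0 x) has_real_derivative Ux t0 x - \<delta> * E * (2 * x)) (at x)" for x
    unfolding penalized_def E_def using U_space_deriv[OF t0, of x]
    by (auto intro!: derivative_eq_intros simp: power2_eq_square)
  have crit: "Ux t0 x0 - \<delta> * E * (2 * x0) = 0"
    using DERIV_local_max[OF d[of x0], of 1] max by auto
  have d': "((\<lambda>x. Ux t0 x - \<delta> * E * (2 * x)) has_real_derivative Uxx t0 x0 - \<delta> * E * 2) (at x0)"
    using Ux_space_deriv[OF t0, of x0] by (auto intro!: derivative_eq_intros)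
  have "Uxx t0 x0 - \<delta> * E * 2 \<le> 0"
    by (rule second_deriv_nonpos_at_max[OF d d' crit max])
  with crit show "Ux t0 x0 = 2 * \<delta> * exp (rate * (T - t0)) * x0"
    and "Uxx t0 x0 \<le> 2 * \<delta> * exp (rate * (T - t0))"
    by (simp_all add: E_def algebra_simps)
qed

lemma penalized_time_max:
  assumes t0: "t0 \<in> {0..<T}"
    and max: "\<And>t. t \<in> {0..T} \<Longrightarrow> exp (L * t) * penalized \<delta> t x0 \<le> exp (L * t0) * penalized \<delta> t0 x0"
  shows "L * penalized \<delta> t0 x0 + Ut t0 x0 + c * exp (L * (T - t0)) + L * barrier t0
           + rate * (\<delta> * exp (rate * (T - t0)) * (1 + x0\<^sup>2)) \<le> 0"
    (is "?D \<le> 0")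
proof -
  have "((\<lambda>t. exp (L * t) * penalized \<delta> t x0) has_real_derivative exp (L * t0) * ?D)
          (at t0 within {0..T})"
    unfolding penalized_def using U_time_deriv[OF t0, of x0]
    by (auto intro!: derivative_eq_intros DERIV_subset[OF barrier_deriv] simp: algebra_simps)
  then have "exp (L * t0) * ?D \<le> 0"
    by (rule has_real_derivative_nonpos_at_left_max) (use t0 max in auto)
  then show ?thesis by (simp add: mult_le_0_iff)
qed

lemma penalty_drift_le:
  assumes t0: "t0 \<in> {0..<T}" and "\<delta> > 0" "E \<ge> 1" and Ux0: "Ux t0 x0 = 2 * \<delta> * E * x0"
  shows "Ux t0 x0 * \<beta> t0 x0 \<le> 4 * Cb * (\<delta> * E * (1 + x0\<^sup>2))"
proof -
  have "\<bar>x0\<bar> \<le> 1 + x0\<^sup>2"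
  proof (cases "\<bar>x0\<bar> \<le> 1")
    case False
    then have "\<bar>x0\<bar> * 1 \<le> \<bar>x0\<bar> * \<bar>x0\<bar>" by (intro mult_left_mono) auto
    then show ?thesis by (simp add: power2_eq_square)
  qed (simp add: add_increasing2)
  then have quad: "\<bar>x0\<bar> * (1 + \<bar>x0\<bar>) \<le> 2 * (1 + x0\<^sup>2)"
    by (simp add: power2_eq_square algebra_simps)
  have "Ux t0 x0 * \<beta> t0 x0 \<le> \<bar>Ux t0 x0\<bar> * \<bar>\<beta> t0 x0\<bar>"
    by (metis abs_ge_self abs_mult)
  also have "\<dots> \<le> 2 * \<delta> * E * \<bar>x0\<bar> * (Cb * (1 + \<bar>x0\<bar>))"
    using \<beta>_growth[OF t0, of x0] \<open>\<delta> > 0\<close> \<open>E \<ge> 1\<close>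
    unfolding Ux0 by (simp add: abs_mult mult_left_mono)
  also have "\<dots> = 2 * \<delta> * E * Cb * (\<bar>x0\<bar> * (1 + \<bar>x0\<bar>))" by (simp add: algebra_simps)
  also have "\<dots> \<le> 2 * \<delta> * E * Cb * (2 * (1 + x0\<^sup>2))"
    using quad \<open>\<delta> > 0\<close> \<open>E \<ge> 1\<close> Cb_nonneg by (intro mult_left_mono) auto
  finally show ?thesis by (simp add: algebra_simps)
qed

lemma penalty_diffusion_le:
  assumes "\<delta> > 0" "E \<ge> 1" and Uxx0: "Uxx t0 x0 \<le> 2 * \<delta> * E"
  shows "\<nu> / 2 * Uxx t0 x0 \<le> \<nu> * (\<delta> * E * (1 + x0\<^sup>2))"
proof -
  have "\<nu> / 2 * Uxx t0 x0 \<le> \<nu> / 2 * (2 * \<delta> * E)"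
    using Uxx0 \<nu>_nonneg by (intro mult_left_mono) auto
  also have "\<dots> = \<nu> * (\<delta> * E) * 1" by simp
  also have "\<dots> \<le> \<nu> * (\<delta> * E) * (1 + x0\<^sup>2)"
    using \<nu>_nonneg assms(1,2) by (intro mult_left_mono) auto
  finally show ?thesis by (simp add: mult.assoc)
qed

lemma penalized_nonpos:
  assumes "\<delta> > 0" "s \<in> {0..T}"
  shows "penalized \<delta> s y \<le> 0"
proof (rule ccontr)
  assume "\<not> ?thesis"
  then have "penalized \<delta> s y > 0" by simp
  then obtain t0 x0 where t0: "t0 \<in> {0..<T}" and pos: "penalized \<delta> t0 x0 > 0"
    and max: "\<And>t x. t \<in> {0..T} \<Longrightarrow>
                exp (L * t) * penalized \<delta> t x \<le> exp (L * t0) * penalized \<delta> t0 x0"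
    using penalized_max_attained[OF assms] by blast
  define E where "E = exp (rate * (T - t0))"
  define Y where "Y = \<delta> * E * (1 + x0\<^sup>2)"
  have "E \<ge> 1" using rate_pos t0 by (simp add: E_def)
  have "Y > 0" using \<open>\<delta> > 0\<close> \<open>E \<ge> 1\<close> by (simp add: Y_def add_pos_nonneg)
  have space_max: "penalized \<delta> t0 x \<le> penalized \<delta> t0 x0" for x
    using max[of t0 x] t0 by simp
  note Ux0 = penalized_space_max(1)[OF t0 space_max, folded E_def]
  note Uxx0 = penalized_space_max(2)[OF t0 space_max, folded E_def]
  have time: "L * penalized \<delta> t0 x0 + Ut t0 x0 + c * exp (L * (T - t0)) + L * barrier t0
              + rate * Y \<le> 0"
    using penalized_time_max[OF t0 max] by (simp add: Y_def E_def)
  have "U t0 x0 = penalized \<delta> t0 x0 + barrier t0 + Y"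
    by (simp add: penalized_def Y_def E_def)
  then have "L * \<bar>U t0 x0\<bar> = L * penalized \<delta> t0 x0 + L * barrier t0 + L * Y"
    using pos barrier_nonneg[of t0] t0 \<open>Y > 0\<close> by (simp add: distrib_left)
  have drift: "Ux t0 x0 * \<beta> t0 x0 \<le> 4 * Cb * Y"
    using penalty_drift_le[OF t0 \<open>\<delta> > 0\<close> \<open>E \<ge> 1\<close> Ux0] by (simp add: Y_def)
  have diffusion: "\<nu> / 2 * Uxx t0 x0 \<le> \<nu> * Y"
    using penalty_diffusion_le[OF \<open>\<delta> > 0\<close> \<open>E \<ge> 1\<close> Uxx0] by (simp add: Y_def)
  have "c \<le> c * exp (L * (T - t0))"
    using c_nonneg L_nonneg t0 by (simp add: mult_le_cancel_left1)
  moreover have "rate * Y = 4 * Cb * Y + \<nu> * Y + L * Y + Y" by (simp add: rate_def algebra_simps)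
  ultimately show False
    using subsolution[OF t0, of x0] time \<open>L * \<bar>U t0 x0\<bar> = _\<close> drift diffusion \<open>Y > 0\<close>
    by linarith
qed

lemma subsolution_le_barrier:
  assumes "t \<in> {0..T}"
  shows "U t x \<le> barrier t"
proof (rule field_le_epsilon)
  fix e :: real assume "e > 0"
  define w where "w = exp (rate * (T - t)) * (1 + x\<^sup>2)"
  have "w > 0" by (simp add: w_def add_pos_nonneg)
  have "penalized (e / w) t x \<le> 0"
    using penalized_nonpos[OF _ assms] \<open>e > 0\<close> \<open>w > 0\<close> by simp
  then show "U t x \<le> barrier t + e"
    using \<open>w > 0\<close> by (simp add: penalized_def w_def[symmetric] mult.assoc)
qed

end

lemma bounded_image_abs_le:
  fixes F :: "real \<Rightarrow> real \<Rightarrow> real"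
  assumes "bounded ((\<lambda>p. F (fst p) (snd p)) ` (S \<times> UNIV))"
  obtains M where "\<And>t x. t \<in> S \<Longrightarrow> \<bar>F t x\<bar> \<le> M"
proof -
  obtain M where "\<forall>y \<in> (\<lambda>p. F (fst p) (snd p)) ` (S \<times> UNIV). \<bar>y\<bar> \<le> M"
    using assms by (auto simp: bounded_iff)
  then show ?thesis by (intro that[of M]) force
qed

lemma pde_sol_drift_linear_growth:
  fixes dr :: "real \<Rightarrow> real \<Rightarrow> real \<Rightarrow> real" and \<Psi> :: "real \<Rightarrow> real \<Rightarrow> real"
  assumes T: "T > 0" and \<Psi>: "pde_sol T \<sigma>0 \<theta> dr src g \<Psi>"
    and Cd: "Cd \<ge> 0" "\<And>t x y. t \<in> {0..<T} \<Longrightarrow> \<bar>dr t x y\<bar> \<le> Cd * (1 + \<bar>x\<bar> + \<bar>y\<bar>)"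
  obtains Cb where "Cb \<ge> 0" "\<And>s y. s \<in> {0..<T} \<Longrightarrow> \<bar>dr s y (\<Psi> s y)\<bar> \<le> Cb * (1 + \<bar>y\<bar>)"
proof -
  obtain Gx where
    \<Psi>_deriv: "\<And>s y. s \<in> {0..<T} \<Longrightarrow> ((\<lambda>z. \<Psi> s z) has_real_derivative Gx s y) (at y)"
    and \<Psi>_cont: "continuous_on ({0..T} \<times> UNIV) (\<lambda>p. \<Psi> (fst p) (snd p))"
    and Gx_bounded: "bounded ((\<lambda>p. Gx (fst p) (snd p)) ` ({0..<T} \<times> UNIV))"
    using \<Psi> unfolding pde_sol_def by blast
  obtain G1 where G1: "\<And>t x. t \<in> {0..<T} \<Longrightarrow> \<bar>Gx t x\<bar> \<le> G1"
    using bounded_image_abs_le[OF Gx_bounded] by blast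
  have "G1 \<ge> 0" using G1[of 0 0] T by force
  obtain C\<Psi> where "C\<Psi> \<ge> 0"
    and C\<Psi>: "\<And>s y. s \<in> {0..<T} \<Longrightarrow> \<bar>\<Psi> s y\<bar> \<le> C\<Psi> + G1 * \<bar>y\<bar>"
    using continuous_slice_affine_bound[where Fx = Gx, OF \<Psi>_cont \<Psi>_deriv G1] by blast
  have "\<bar>dr s y (\<Psi> s y)\<bar> \<le> Cd * (1 + C\<Psi> + G1) * (1 + \<bar>y\<bar>)" if s: "s \<in> {0..<T}" for s y
  proof -
    have "C\<Psi> * \<bar>y\<bar> \<ge> 0" using \<open>C\<Psi> \<ge> 0\<close> by simp
    then have "1 + \<bar>y\<bar> + \<bar>\<Psi> s y\<bar> \<le> (1 + C\<Psi> + G1) * (1 + \<bar>y\<bar>)"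
      using C\<Psi>[OF s, of y] \<open>G1 \<ge> 0\<close> by (simp add: algebra_simps)
    then show ?thesis
      using Cd(2)[OF s, of y "\<Psi> s y"] Cd(1) by (metis mult.assoc mult_left_mono order_trans)
  qed
  moreover have "Cd * (1 + C\<Psi> + G1) \<ge> 0" using Cd(1) \<open>C\<Psi> \<ge> 0\<close> \<open>G1 \<ge> 0\<close> by simp
  ultimately show ?thesis using that by blast
qed

lemma difference_residual_bound:
  fixes ft fx fxx gt gx gxx d1 d2 s1 s2 u :: real
  assumes "ft + fx * d1 + s1 + \<sigma>0\<^sup>2 / 2 * fxx = 0"
    and "gt + gx * d2 + s2 + (\<theta> + \<sigma>0\<^sup>2) / 2 * gxx = 0"
    and "\<bar>d1 - d2\<bar> \<le> Lf * \<bar>u\<bar>" "\<bar>s1 - s2\<bar> \<le> Ls * \<bar>u\<bar>"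
    and "M1 \<ge> 0" "\<bar>fx\<bar> \<le> M1" "\<theta> \<ge> 0" "\<bar>fxx\<bar> \<le> M2"
  shows "\<bar>(ft - gt) + (fx - gx) * d2 + (\<theta> + \<sigma>0\<^sup>2) / 2 * (fxx - gxx)\<bar>
           \<le> (M1 * Lf + Ls) * \<bar>u\<bar> + \<theta> / 2 * M2"
proof -
  have "(ft - gt) + (fx - gx) * d2 + (\<theta> + \<sigma>0\<^sup>2) / 2 * (fxx - gxx)
          = - fx * (d1 - d2) - (s1 - s2) + \<theta> / 2 * fxx"
    using assms(1,2) by (simp add: field_simps)
  moreover have "\<bar>fx * (d1 - d2)\<bar> \<le> M1 * (Lf * \<bar>u\<bar>)"
    unfolding abs_mult using assms(3,5,6) by (intro mult_mono) auto
  moreover have "\<bar>\<theta> / 2 * fxx\<bar> \<le> \<theta> / 2 * M2"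
    unfolding abs_mult using assms(7,8) by (simp add: mult_left_mono)
  ultimately show ?thesis using assms(4) by (simp add: algebra_simps)
qed

lemma pde_sol_signed_difference_le:
  fixes dr src :: "real \<Rightarrow> real \<Rightarrow> real \<Rightarrow> real" and \<Phi> Ft Fx Fxx \<Psi> :: "real \<Rightarrow> real \<Rightarrow> real"
  assumes T: "T > 0" and \<theta>: "\<theta> \<ge> 0" and \<epsilon>: "\<epsilon> \<in> {-1, 1}"
    and \<Phi>_deriv: "\<And>t x. t \<in> {0..<T} \<Longrightarrow>
          ((\<lambda>s. \<Phi> s x) has_real_derivative Ft t x) (at t within {0..T})
        \<and> ((\<lambda>y. \<Phi> t y) has_real_derivative Fx t x) (at x)
        \<and> ((\<lambda>y. Fx t y) has_real_derivative Fxx t x) (at x)"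
    and \<Phi>_cont: "continuous_on ({0..T} \<times> UNIV) (\<lambda>p. \<Phi> (fst p) (snd p))"
    and M1: "M1 \<ge> 0" "\<And>t x. t \<in> {0..<T} \<Longrightarrow> \<bar>Fx t x\<bar> \<le> M1"
    and M2: "M2 \<ge> 0" "\<And>t x. t \<in> {0..<T} \<Longrightarrow> \<bar>Fxx t x\<bar> \<le> M2"
    and \<Phi>_eq: "\<And>t x. t \<in> {0..<T} \<Longrightarrow>
          Ft t x + Fx t x * dr t x (\<Phi> t x) + src t x (\<Phi> t x) + \<sigma>0\<^sup>2 / 2 * Fxx t x = 0"
    and \<Phi>_terminal: "\<And>x. \<Phi> T x = deriv g x / 2"
    and \<Psi>: "pde_sol T \<sigma>0 \<theta> dr src g \<Psi>"
    and Lf: "Lf \<ge> 0" "\<And>t x y1 y2. t \<in> {0..<T} \<Longrightarrow> \<bar>dr t x y1 - dr t x y2\<bar> \<le> Lf * \<bar>y1 - y2\<bar>"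
    and Ls: "Ls \<ge> 0" "\<And>t x y1 y2. t \<in> {0..<T} \<Longrightarrow> \<bar>src t x y1 - src t x y2\<bar> \<le> Ls * \<bar>y1 - y2\<bar>"
    and Cd: "Cd \<ge> 0" "\<And>t x y. t \<in> {0..<T} \<Longrightarrow> \<bar>dr t x y\<bar> \<le> Cd * (1 + \<bar>x\<bar> + \<bar>y\<bar>)"
    and t: "t \<in> {0..T}"
  shows "\<epsilon> * (\<Phi> t x - \<Psi> t x) \<le> \<theta> / 2 * M2 * (T - t + 1) * exp ((M1 * Lf + Ls) * (T - t))"
proof -
  obtain Gt Gx Gxx where
    \<Psi>_deriv: "\<And>t x. t \<in> {0..<T} \<Longrightarrow>
          ((\<lambda>s. \<Psi> s x) has_real_derivative Gt t x) (at t within {0..T})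
        \<and> ((\<lambda>y. \<Psi> t y) has_real_derivative Gx t x) (at x)
        \<and> ((\<lambda>y. Gx t y) has_real_derivative Gxx t x) (at x)"
    and \<Psi>_cont: "continuous_on ({0..T} \<times> UNIV) (\<lambda>p. \<Psi> (fst p) (snd p))"
    and Gx_bounded: "bounded ((\<lambda>p. Gx (fst p) (snd p)) ` ({0..<T} \<times> UNIV))"
    and \<Psi>_eq: "\<And>t x. t \<in> {0..<T} \<Longrightarrow>
          Gt t x + Gx t x * dr t x (\<Psi> t x) + src t x (\<Psi> t x) + (\<theta> + \<sigma>0\<^sup>2) / 2 * Gxx t x = 0"
    and \<Psi>_terminal: "\<And>x. \<Psi> T x = deriv g x / 2"
    using \<Psi> unfolding pde_sol_def by blast
  obtain G1 where G1: "\<And>t x. t \<in> {0..<T} \<Longrightarrow> \<bar>Gx t x\<bar> \<le> G1"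
    using bounded_image_abs_le[OF Gx_bounded] by blast
  obtain Cb where "Cb \<ge> 0" and \<beta>_growth: "\<And>s y. s \<in> {0..<T} \<Longrightarrow> \<bar>dr s y (\<Psi> s y)\<bar> \<le> Cb * (1 + \<bar>y\<bar>)"
    using pde_sol_drift_linear_growth[OF T \<Psi> Cd] by blast
  define L where "L = M1 * Lf + Ls"
  define c where "c = \<theta> / 2 * M2"
  have residual: "\<bar>(Ft s y - Gt s y) + (Fx s y - Gx s y) * dr s y (\<Psi> s y)
                    + (\<theta> + \<sigma>0\<^sup>2) / 2 * (Fxx s y - Gxx s y)\<bar> \<le> L * \<bar>\<Phi> s y - \<Psi> s y\<bar> + c"
    if s: "s \<in> {0..<T}" for s y
    unfolding L_def c_def
    by (rule difference_residual_bound[OF \<Phi>_eq[OF s] \<Psi>_eq[OF s] Lf(2)[OF s] Ls(2)[OF s]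
          M1(1) M1(2)[OF s] \<theta> M2(2)[OF s]])
  define U where "U t x = \<epsilon> * (\<Phi> t x - \<Psi> t x)" for t x
  have "\<bar>\<epsilon>\<bar> = 1" using \<epsilon> by auto
  interpret parabolic_subsolution T "\<theta> + \<sigma>0\<^sup>2" L c Cb "M1 + G1" U
      "\<lambda>t x. \<epsilon> * (Ft t x - Gt t x)" "\<lambda>t x. \<epsilon> * (Fx t x - Gx t x)"
      "\<lambda>t x. \<epsilon> * (Fxx t x - Gxx t x)" "\<lambda>s y. dr s y (\<Psi> s y)"
  proof
    show "L \<ge> 0" "c \<ge> 0" "Cb \<ge> 0"
      using M1(1) M2(1) Lf(1) Ls(1) \<theta> \<open>Cb \<ge> 0\<close> by (simp_all add: L_def c_def)
    show "continuous_on ({0..T} \<times> UNIV) (\<lambda>p. U (fst p) (snd p))"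
      unfolding U_def by (intro continuous_intros \<Phi>_cont \<Psi>_cont)
    show "U T x \<le> 0" for x by (simp add: U_def \<Phi>_terminal \<Psi>_terminal)
    fix s y assume s: "s \<in> {0..<T}"
    show "((\<lambda>r. U r y) has_real_derivative \<epsilon> * (Ft s y - Gt s y)) (at s within {0..T})"
      "((\<lambda>z. U s z) has_real_derivative \<epsilon> * (Fx s y - Gx s y)) (at y)"
      "((\<lambda>z. \<epsilon> * (Fx s z - Gx s z)) has_real_derivative \<epsilon> * (Fxx s y - Gxx s y)) (at y)"
      unfolding U_def using \<Phi>_deriv[OF s, of y] \<Psi>_deriv[OF s, of y]
      by (auto intro!: DERIV_cmult DERIV_diff)
    show "\<bar>\<epsilon> * (Fx s y - Gx s y)\<bar> \<le> M1 + G1"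
      using M1(2)[OF s, of y] G1[OF s, of y] \<open>\<bar>\<epsilon>\<bar> = 1\<close> by (simp add: abs_mult)
    show "\<bar>dr s y (\<Psi> s y)\<bar> \<le> Cb * (1 + \<bar>y\<bar>)" by (rule \<beta>_growth[OF s])
    show "- c \<le> \<epsilon> * (Ft s y - Gt s y) + \<epsilon> * (Fx s y - Gx s y) * dr s y (\<Psi> s y)
              + (\<theta> + \<sigma>0\<^sup>2) / 2 * (\<epsilon> * (Fxx s y - Gxx s y)) + L * \<bar>U s y\<bar>"
    proof -
      let ?R = "(Ft s y - Gt s y) + (Fx s y - Gx s y) * dr s y (\<Psi> s y)
                + (\<theta> + \<sigma>0\<^sup>2) / 2 * (Fxx s y - Gxx s y)"
      have "- \<bar>\<epsilon> * ?R\<bar> \<le> \<epsilon> * ?R" by arith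
      then have "- \<bar>?R\<bar> \<le> \<epsilon> * ?R" using \<open>\<bar>\<epsilon>\<bar> = 1\<close> by (simp add: abs_mult)
      moreover have "L * \<bar>U s y\<bar> = L * \<bar>\<Phi> s y - \<Psi> s y\<bar>" using \<open>\<bar>\<epsilon>\<bar> = 1\<close> by (simp add: U_def abs_mult)
      moreover have "\<epsilon> * (Ft s y - Gt s y) + \<epsilon> * (Fx s y - Gx s y) * dr s y (\<Psi> s y)
              + (\<theta> + \<sigma>0\<^sup>2) / 2 * (\<epsilon> * (Fxx s y - Gxx s y)) = \<epsilon> * ?R"
        by (simp add: algebra_simps)
      ultimately show ?thesis using residual[OF s, of y] by linarith
    qed
  qed (use T \<theta> in simp_all)
  show ?thesis
    using subsolution_le_barrier[OF t, of x, unfolded barrier_def] by (simp add: U_def L_def c_def)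
qed

lemma pde_sol_viscosity_perturbation:
  fixes dr src :: "real \<Rightarrow> real \<Rightarrow> real \<Rightarrow> real" and \<Phi> :: "real \<Rightarrow> real \<Rightarrow> real"
  assumes T: "T > 0" and \<Phi>: "pde_sol T \<sigma>0 0 dr src g \<Phi>"
    and Lf: "Lf \<ge> 0" "\<And>t x y1 y2. t \<in> {0..<T} \<Longrightarrow> \<bar>dr t x y1 - dr t x y2\<bar> \<le> Lf * \<bar>y1 - y2\<bar>"
    and Ls: "Ls \<ge> 0" "\<And>t x y1 y2. t \<in> {0..<T} \<Longrightarrow> \<bar>src t x y1 - src t x y2\<bar> \<le> Ls * \<bar>y1 - y2\<bar>"
    and Cd: "Cd \<ge> 0" "\<And>t x y. t \<in> {0..<T} \<Longrightarrow> \<bar>dr t x y\<bar> \<le> Cd * (1 + \<bar>x\<bar> + \<bar>y\<bar>)"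
  obtains K where "\<And>\<theta> \<Psi> t x. \<theta> \<ge> 0 \<Longrightarrow> pde_sol T \<sigma>0 \<theta> dr src g \<Psi> \<Longrightarrow> t \<in> {0..T} \<Longrightarrow>
                     \<bar>\<Phi> t x - \<Psi> t x\<bar> \<le> K * \<theta>"
proof -
  obtain Ft Fx Fxx where
    \<Phi>_deriv: "\<And>t x. t \<in> {0..<T} \<Longrightarrow>
          ((\<lambda>s. \<Phi> s x) has_real_derivative Ft t x) (at t within {0..T})
        \<and> ((\<lambda>y. \<Phi> t y) has_real_derivative Fx t x) (at x)
        \<and> ((\<lambda>y. Fx t y) has_real_derivative Fxx t x) (at x)"
    and \<Phi>_cont: "continuous_on ({0..T} \<times> UNIV) (\<lambda>p. \<Phi> (fst p) (snd p))"
    and Fx_bounded: "bounded ((\<lambda>p. Fx (fst p) (snd p)) ` ({0..<T} \<times> UNIV))"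
    and Fxx_bounded: "bounded ((\<lambda>p. Fxx (fst p) (snd p)) ` ({0..<T} \<times> UNIV))"
    and \<Phi>_eq: "\<And>t x. t \<in> {0..<T} \<Longrightarrow>
          Ft t x + Fx t x * dr t x (\<Phi> t x) + src t x (\<Phi> t x) + \<sigma>0\<^sup>2 / 2 * Fxx t x = 0"
    and \<Phi>_terminal: "\<And>x. \<Phi> T x = deriv g x / 2"
    using \<Phi> unfolding pde_sol_def add_0_left by blast
  obtain M1 where M1: "\<And>t x. t \<in> {0..<T} \<Longrightarrow> \<bar>Fx t x\<bar> \<le> M1"
    using bounded_image_abs_le[OF Fx_bounded] by blast
  obtain M2 where M2: "\<And>t x. t \<in> {0..<T} \<Longrightarrow> \<bar>Fxx t x\<bar> \<le> M2"
    using bounded_image_abs_le[OF Fxx_bounded] by blast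
  have "M1 \<ge> 0" "M2 \<ge> 0" using M1[of 0 0] M2[of 0 0] T by force+
  define K where "K = M2 / 2 * (T + 1) * exp ((M1 * Lf + Ls) * T)"
  show thesis
  proof (rule that)
    fix \<theta> \<Psi> t x
    assume \<theta>: "\<theta> \<ge> 0" and \<Psi>: "pde_sol T \<sigma>0 \<theta> dr src g \<Psi>" and t: "t \<in> {0..T}"
    have signed: "\<epsilon> * (\<Phi> t x - \<Psi> t x)
                    \<le> \<theta> / 2 * M2 * (T - t + 1) * exp ((M1 * Lf + Ls) * (T - t))"
      if "\<epsilon> \<in> {-1, 1}" for \<epsilon>
      by (rule pde_sol_signed_difference_le[OF T \<theta> that \<Phi>_deriv \<Phi>_cont \<open>M1 \<ge> 0\<close> M1
            \<open>M2 \<ge> 0\<close> M2 \<Phi>_eq \<Phi>_terminal \<Psi> Lf Ls Cd t])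
    let ?r = "M1 * Lf + Ls"
    have "exp (?r * (T - t)) \<le> exp (?r * T)"
      using t \<open>M1 \<ge> 0\<close> Lf(1) Ls(1) by (simp add: mult_left_mono)
    moreover have "T - t + 1 \<le> T + 1" using t by simp
    ultimately have "(T - t + 1) * exp (?r * (T - t)) \<le> (T + 1) * exp (?r * T)"
      using t by (intro mult_mono) auto
    then have "\<theta> / 2 * M2 * ((T - t + 1) * exp (?r * (T - t)))
                 \<le> \<theta> / 2 * M2 * ((T + 1) * exp (?r * T))"
      using \<theta> \<open>M2 \<ge> 0\<close> by (intro mult_left_mono) auto
    then have "\<theta> / 2 * M2 * (T - t + 1) * exp (?r * (T - t)) \<le> K * \<theta>"
      by (simp add: K_def algebra_simps)
    then show "\<bar>\<Phi> t x - \<Psi> t x\<bar> \<le> K * \<theta>"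
      using signed[of 1] signed[of "-1"] by (simp add: abs_le_iff)
  qed
qed

lemma bdd_C2_bounds:
  assumes "bdd_C2 f"
  obtains M L where "\<And>x. \<bar>f x\<bar> \<le> M" "\<And>x. \<bar>deriv f x\<bar> \<le> L"
    "\<And>x. (f has_real_derivative deriv f x) (at x)"
proof -
  from assms obtain M L where "\<forall>x. \<bar>f x\<bar> \<le> M" "\<forall>x. \<bar>deriv f x\<bar> \<le> L"
    unfolding bdd_C2_def bounded_iff by auto
  with assms show ?thesis
    by (intro that[of M L]) (auto simp: bdd_C2_def DERIV_deriv_iff_real_differentiable)
qed

lemma driftF_lipschitz:
  assumes \<rho>: "\<And>u v. \<bar>\<rho> u - \<rho> v\<bar> \<le> Lr * \<bar>u - v\<bar>"
    and b: "\<And>u v. \<bar>b u - b v\<bar> \<le> Lb * \<bar>u - v\<bar>"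
  shows "\<bar>driftF A B a b \<rho> P t x y1 - driftF A B a b \<rho> P t x y2\<bar> \<le> (\<bar>B\<bar> + Lb) * Lr * \<bar>y1 - y2\<bar>"
    (is "\<bar>?D\<bar> \<le> _")
proof -
  define k1 k2 where "k1 = \<rho> (P t * x + y1)" and "k2 = \<rho> (P t * x + y2)"
  have "\<bar>k1 - k2\<bar> \<le> Lr * \<bar>y1 - y2\<bar>"
    using \<rho>[of "P t * x + y1" "P t * x + y2"] by (simp add: k1_def k2_def)
  have "Lb \<ge> 0" using b[of 1 0] by simp
  have "?D = B * (k1 - k2) + (b k1 - b k2)"
    by (simp add: driftF_def kfun_def k1_def k2_def algebra_simps)
  then have "\<bar>?D\<bar> \<le> \<bar>B\<bar> * \<bar>k1 - k2\<bar> + Lb * \<bar>k1 - k2\<bar>"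
    using abs_triangle_ineq[of "B * (k1 - k2)" "b k1 - b k2"] b[of k1 k2] by (simp add: abs_mult)
  also have "\<dots> = (\<bar>B\<bar> + Lb) * \<bar>k1 - k2\<bar>" by (simp add: algebra_simps)
  also have "\<dots> \<le> (\<bar>B\<bar> + Lb) * (Lr * \<bar>y1 - y2\<bar>)"
    using \<open>\<bar>k1 - k2\<bar> \<le> _\<close> \<open>Lb \<ge> 0\<close> by (intro mult_left_mono) auto
  finally show ?thesis by (simp add: mult.assoc)
qed

lemma sourceF_diff:
  "sourceF A B R a b q \<rho> P t x y1 - sourceF A B R a b q \<rho> P t x y2
     = P t * (driftF A B a b \<rho> P t x y1 - driftF A B a b \<rho> P t x y2) + (A + deriv a x) * (y1 - y2)"
  by (simp add: sourceF_def driftF_def algebra_simps)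

lemma sourceF_lipschitz:
  assumes drift: "\<bar>driftF A B a b \<rho> P t x y1 - driftF A B a b \<rho> P t x y2\<bar> \<le> Lf * \<bar>y1 - y2\<bar>"
    and "\<bar>P t\<bar> \<le> Pm" and "\<bar>deriv a x\<bar> \<le> La"
  shows "\<bar>sourceF A B R a b q \<rho> P t x y1 - sourceF A B R a b q \<rho> P t x y2\<bar>
           \<le> (Pm * Lf + \<bar>A\<bar> + La) * \<bar>y1 - y2\<bar>"
proof -
  let ?D = "driftF A B a b \<rho> P t x y1 - driftF A B a b \<rho> P t x y2"
  have "\<bar>P t * ?D\<bar> \<le> Pm * (Lf * \<bar>y1 - y2\<bar>)"
    unfolding abs_mult using assms(2) drift by (intro mult_mono) auto
  moreover have "\<bar>(A + deriv a x) * (y1 - y2)\<bar> \<le> (\<bar>A\<bar> + La) * \<bar>y1 - y2\<bar>"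
    unfolding abs_mult using assms(3) by (intro mult_right_mono) auto
  moreover have "(Pm * Lf + \<bar>A\<bar> + La) * \<bar>y1 - y2\<bar>
                   = Pm * (Lf * \<bar>y1 - y2\<bar>) + (\<bar>A\<bar> + La) * \<bar>y1 - y2\<bar>"
    by (simp add: algebra_simps)
  ultimately show ?thesis
    unfolding sourceF_diff using abs_triangle_ineq[of "P t * ?D" "(A + deriv a x) * (y1 - y2)"]
    by linarith
qed

lemma driftF_linear_growth:
  assumes a: "\<And>x. \<bar>a x\<bar> \<le> Ma" and b: "\<And>v. \<bar>b v\<bar> \<le> Mb"
    and \<rho>: "\<And>u v. \<bar>\<rho> u - \<rho> v\<bar> \<le> Lr * \<bar>u - v\<bar>" and P: "\<bar>P t\<bar> \<le> Pm"
  shows "\<bar>driftF A B a b \<rho> P t x y\<bar>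
           \<le> (Ma + Mb + \<bar>B\<bar> * \<bar>\<rho> 0\<bar> + \<bar>A\<bar> + \<bar>B\<bar> * Lr * (Pm + 1)) * (1 + \<bar>x\<bar> + \<bar>y\<bar>)"
    (is "\<bar>?D\<bar> \<le> ?C * _")
proof -
  define k where "k = \<rho> (P t * x + y)"
  have "Ma \<ge> 0" "Mb \<ge> 0" "Lr \<ge> 0" "Pm \<ge> 0"
    using a[of 0] b[of 0] \<rho>[of 1 0] P by auto
  have "\<bar>P t * x\<bar> \<le> Pm * \<bar>x\<bar>" unfolding abs_mult using P by (simp add: mult_right_mono)
  then have "\<bar>P t * x + y\<bar> \<le> Pm * \<bar>x\<bar> + \<bar>y\<bar>" by linarith
  then have "Lr * \<bar>P t * x + y\<bar> \<le> Lr * (Pm * \<bar>x\<bar> + \<bar>y\<bar>)"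
    using \<open>Lr \<ge> 0\<close> by (rule mult_left_mono)
  moreover have "\<bar>k - \<rho> 0\<bar> \<le> Lr * \<bar>P t * x + y\<bar>"
    using \<rho>[of "P t * x + y" 0] by (simp add: k_def)
  ultimately have "\<bar>k\<bar> \<le> \<bar>\<rho> 0\<bar> + Lr * (Pm * \<bar>x\<bar> + \<bar>y\<bar>)" by arith
  then have "\<bar>B\<bar> * \<bar>k\<bar> \<le> \<bar>B\<bar> * (\<bar>\<rho> 0\<bar> + Lr * (Pm * \<bar>x\<bar> + \<bar>y\<bar>))"
    by (simp add: mult_left_mono)
  moreover have "\<bar>A * x + a x + B * k + b k\<bar> \<le> \<bar>A * x\<bar> + \<bar>a x\<bar> + \<bar>B * k\<bar> + \<bar>b k\<bar>" by arith
  ultimately have "\<bar>?D\<bar> \<le> \<bar>A\<bar> * \<bar>x\<bar> + Ma + \<bar>B\<bar> * (\<bar>\<rho> 0\<bar> + Lr * (Pm * \<bar>x\<bar> + \<bar>y\<bar>)) + Mb"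
    using a[of x] b[of k] unfolding driftF_def kfun_def k_def[symmetric] abs_mult by linarith
  also have "\<dots> = (Ma + Mb + \<bar>B\<bar> * \<bar>\<rho> 0\<bar>) + (\<bar>A\<bar> + \<bar>B\<bar> * Lr * Pm) * \<bar>x\<bar> + (\<bar>B\<bar> * Lr) * \<bar>y\<bar>"
    by (simp add: algebra_simps)
  also have "\<dots> \<le> ?C + ?C * \<bar>x\<bar> + ?C * \<bar>y\<bar>"
  proof -
    have "\<bar>B\<bar> * Lr * Pm \<ge> 0" "\<bar>B\<bar> * Lr \<ge> 0" "\<bar>B\<bar> * \<bar>\<rho> 0\<bar> \<ge> 0"
      using \<open>Lr \<ge> 0\<close> \<open>Pm \<ge> 0\<close> by simp_all
    moreover have "\<bar>B\<bar> * Lr * (Pm + 1) = \<bar>B\<bar> * Lr * Pm + \<bar>B\<bar> * Lr" by (simp add: distrib_left)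
    ultimately have C: "Ma + Mb + \<bar>B\<bar> * \<bar>\<rho> 0\<bar> \<le> ?C" "\<bar>A\<bar> + \<bar>B\<bar> * Lr * Pm \<le> ?C"
        "\<bar>B\<bar> * Lr \<le> ?C"
      using \<open>Ma \<ge> 0\<close> \<open>Mb \<ge> 0\<close> abs_ge_zero[of A] by linarith+
    have "(\<bar>A\<bar> + \<bar>B\<bar> * Lr * Pm) * \<bar>x\<bar> \<le> ?C * \<bar>x\<bar>" "\<bar>B\<bar> * Lr * \<bar>y\<bar> \<le> ?C * \<bar>y\<bar>"
      using C(2,3) by (simp_all add: mult_right_mono)
    with C(1) show ?thesis by linarith
  qed
  finally show ?thesis by (simp add: algebra_simps)
qed

lemma driftF_sourceF_regular:
  fixes a b \<rho> P :: "real \<Rightarrow> real"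
  assumes "bdd_C2 a" "bdd_C2 b" and "\<And>y. \<rho> differentiable (at y)" "bounded (range (deriv \<rho>))"
    and "continuous_on {0..T} P"
  obtains Lf Ls Cd where "Lf \<ge> 0" "Ls \<ge> 0" "Cd \<ge> 0"
    "\<And>t x y1 y2. t \<in> {0..T} \<Longrightarrow>
       \<bar>driftF A B a b \<rho> P t x y1 - driftF A B a b \<rho> P t x y2\<bar> \<le> Lf * \<bar>y1 - y2\<bar>"
    "\<And>t x y1 y2. t \<in> {0..T} \<Longrightarrow>
       \<bar>sourceF A B R a b q \<rho> P t x y1 - sourceF A B R a b q \<rho> P t x y2\<bar> \<le> Ls * \<bar>y1 - y2\<bar>"
    "\<And>t x y. t \<in> {0..T} \<Longrightarrow> \<bar>driftF A B a b \<rho> P t x y\<bar> \<le> Cd * (1 + \<bar>x\<bar> + \<bar>y\<bar>)"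
proof -
  obtain Ma La where Ma: "\<And>x. \<bar>a x\<bar> \<le> Ma" and La: "\<And>x. \<bar>deriv a x\<bar> \<le> La"
    using bdd_C2_bounds[OF assms(1)] by metis
  obtain Mb Lb where Mb: "\<And>x. \<bar>b x\<bar> \<le> Mb" and b_lip: "\<And>u v. \<bar>b u - b v\<bar> \<le> Lb * \<bar>u - v\<bar>"
    using bdd_C2_bounds[OF assms(2)] abs_diff_le_of_deriv_bound by metis
  obtain Lr where "\<forall>y. \<bar>deriv \<rho> y\<bar> \<le> Lr" using assms(4) by (auto simp: bounded_iff)
  then have \<rho>_lip: "\<And>u v. \<bar>\<rho> u - \<rho> v\<bar> \<le> Lr * \<bar>u - v\<bar>"
    using assms(3) abs_diff_le_of_deriv_bound[of \<rho> "deriv \<rho>" Lr]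
    by (simp add: DERIV_deriv_iff_real_differentiable)
  obtain Pm where Pm: "\<forall>t\<in>{0..T}. \<bar>P t\<bar> \<le> Pm"
    using compact_imp_bounded[OF compact_continuous_image[OF assms(5)]] by (auto simp: bounded_iff)
  have "Lb \<ge> 0" "Lr \<ge> 0" "La \<ge> 0" using b_lip[of 1 0] \<rho>_lip[of 1 0] La[of 0] by auto
  show thesis
  proof (rule that)
    fix t x y y1 y2 assume t: "t \<in> {0..T}"
    have "\<bar>P t\<bar> \<le> max Pm 0" using Pm t by fastforce
    show "\<bar>driftF A B a b \<rho> P t x y1 - driftF A B a b \<rho> P t x y2\<bar> \<le> (\<bar>B\<bar> + Lb) * Lr * \<bar>y1 - y2\<bar>"
      by (rule driftF_lipschitz[OF \<rho>_lip b_lip])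
    then show "\<bar>sourceF A B R a b q \<rho> P t x y1 - sourceF A B R a b q \<rho> P t x y2\<bar>
                 \<le> (max Pm 0 * ((\<bar>B\<bar> + Lb) * Lr) + \<bar>A\<bar> + La) * \<bar>y1 - y2\<bar>"
      using \<open>\<bar>P t\<bar> \<le> max Pm 0\<close> La by (intro sourceF_lipschitz) (auto simp: mult.assoc)
    show "\<bar>driftF A B a b \<rho> P t x y\<bar>
            \<le> (Ma + Mb + \<bar>B\<bar> * \<bar>\<rho> 0\<bar> + \<bar>A\<bar> + \<bar>B\<bar> * Lr * (max Pm 0 + 1)) * (1 + \<bar>x\<bar> + \<bar>y\<bar>)"
      by (rule driftF_linear_growth[where a = a and b = b and \<rho> = \<rho> and P = P,
            OF Ma Mb \<rho>_lip \<open>\<bar>P t\<bar> \<le> max Pm 0\<close>])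
  qed (use \<open>Lb \<ge> 0\<close> \<open>Lr \<ge> 0\<close> \<open>La \<ge> 0\<close> Ma[of 0] Mb[of 0] in auto)
qed

lemma nn_integral_SUP_le_const:
  assumes "prob_space M" and "\<And>t \<omega>. t \<in> S \<Longrightarrow> f t \<omega> \<le> C"
  shows "(\<integral>\<^sup>+ \<omega>. (\<Squnion>t\<in>S. ennreal (f t \<omega>)) \<partial>M) \<le> ennreal C"
proof -
  have "(\<integral>\<^sup>+ \<omega>. (\<Squnion>t\<in>S. ennreal (f t \<omega>)) \<partial>M) \<le> (\<integral>\<^sup>+ \<omega>. ennreal C \<partial>M)"
    using assms(2) by (intro nn_integral_mono SUP_least ennreal_leI)
  also have "\<dots> = ennreal C"
    using prob_space.emeasure_space_1[OF assms(1)] by simp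
  finally show ?thesis .
qed

theorem mainTheorem14:
  fixes T A B Q R G \<sigma> \<sigma>0 \<epsilon>0 :: real
    and a b q r g \<rho> P :: "real \<Rightarrow> real"
    and \<Phi> :: "real \<Rightarrow> real \<Rightarrow> real"
    and \<Psi> :: "nat \<Rightarrow> real \<Rightarrow> real \<Rightarrow> real"
    and \<mu> :: "real measure"
  assumes hT: "T > 0"
    and A1: "Q \<ge> 0" "R > 0" "G \<ge> 0" "\<sigma> \<ge> 0" "\<sigma>0 > 0"
            "bdd_C2 a" "bdd_C2 b" "bdd_C2 q" "bdd_C2 r" "bdd_C2 g"
    and A2: "prob_space \<mu>" "sets \<mu> = sets borel" "integrable \<mu> (\<lambda>x. x\<^sup>2)"
    and A3: "\<epsilon>0 > 0" "\<And>v y. \<bar>R + deriv (deriv r) v / 2 + y * deriv (deriv b) v\<bar> \<ge> \<epsilon>0"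
    and rho: "\<And>y. \<rho> differentiable (at y)" "continuous_on UNIV (deriv \<rho>)"
             "bounded (range (deriv \<rho>))"
             "\<And>y. R * \<rho> y + deriv r (\<rho> y) / 2 + (B + deriv b (\<rho> y)) * y = 0"
    and Ric: "\<And>t. t \<in> {0..T} \<Longrightarrow>
                (P has_real_derivative (- (2 * A * P t + Q - B\<^sup>2 / R * (P t)\<^sup>2))) (at t within {0..T})"
             "P T = G" "\<And>t. t \<in> {0..T} \<Longrightarrow> P t \<ge> 0"
    and A4: "\<And>t v. t \<in> {0..T} \<Longrightarrow> deriv a v * P t \<ge> B * deriv b v * (P t)\<^sup>2 / R"
            "\<And>v. B\<^sup>2 + B * deriv b v \<ge> 0"
    and Phi: "pde_sol T \<sigma>0 0 (driftF A B a b \<rho> P) (sourceF A B R a b q \<rho> P) g \<Phi>"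
    and Psi: "\<And>N. N \<ge> 1 \<Longrightarrow>
                pde_sol T \<sigma>0 (\<sigma>\<^sup>2 / real N) (driftF A B a b \<rho> P) (sourceF A B R a b q \<rho> P) g (\<Psi> N)"
  shows "\<exists>K. \<forall>N::nat. \<forall>(M::'a measure) W \<xi> X.
           N \<ge> 1 \<and> prob_space M
         \<and> (\<forall>i\<le>N. brownian_motion M (W i))
         \<and> (\<forall>i\<in>{1..N}. \<xi> i \<in> borel_measurable M \<and> distr M borel (\<xi> i) = \<mu>)
         \<and> prob_space.indep_sets M
             (\<lambda>j. case j of Inl i \<Rightarrow> proc_sigma M (W i) | Inr i \<Rightarrow> rv_sigma M (\<xi> i))
             ({0..N} <+> {1..N})
         \<and> (\<forall>\<omega>\<in>space M. continuous_on {0..T} (\<lambda>t. X t \<omega>)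
              \<and> (\<forall>t\<in>{0..T}. X t \<omega> =
                   (\<Sum>i=1..N. \<xi> i \<omega>) / real N
                 + integral {0..t} (\<lambda>s. driftF A B a b \<rho> P s (X s \<omega>) (\<Psi> N s (X s \<omega>)))
                 + \<sigma> / real N * (\<Sum>i=1..N. W i t \<omega>) + \<sigma>0 * W 0 t \<omega>))
         \<longrightarrow> (\<integral>\<^sup>+ \<omega>. (\<Squnion>t\<in>{0..T}. ennreal ((\<Phi> t (X t \<omega>) - \<Psi> N t (X t \<omega>))\<^sup>2)) \<partial>M)
               \<le> ennreal (K / (real N)\<^sup>2)"
proof -
  obtain Lf Ls Cd where "Lf \<ge> 0" "Ls \<ge> 0" "Cd \<ge> 0"
    and coeff: "\<And>t x y1 y2. t \<in> {0..T} \<Longrightarrow>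
        \<bar>driftF A B a b \<rho> P t x y1 - driftF A B a b \<rho> P t x y2\<bar> \<le> Lf * \<bar>y1 - y2\<bar>"
      "\<And>t x y1 y2. t \<in> {0..T} \<Longrightarrow>
        \<bar>sourceF A B R a b q \<rho> P t x y1 - sourceF A B R a b q \<rho> P t x y2\<bar> \<le> Ls * \<bar>y1 - y2\<bar>"
      "\<And>t x y. t \<in> {0..T} \<Longrightarrow> \<bar>driftF A B a b \<rho> P t x y\<bar> \<le> Cd * (1 + \<bar>x\<bar> + \<bar>y\<bar>)"
    using driftF_sourceF_regular[OF A1(6,7) rho(1,3) DERIV_continuous_on[OF Ric(1)]] by blast
  obtain K where K: "\<And>\<theta> \<Psi>' t x. \<theta> \<ge> 0 \<Longrightarrow>
      pde_sol T \<sigma>0 \<theta> (driftF A B a b \<rho> P) (sourceF A B R a b q \<rho> P) g \<Psi>' \<Longrightarrow> t \<in> {0..T} \<Longrightarrow>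
      \<bar>\<Phi> t x - \<Psi>' t x\<bar> \<le> K * \<theta>"
    by (rule pde_sol_viscosity_perturbation[OF hT Phi \<open>Lf \<ge> 0\<close> _ \<open>Ls \<ge> 0\<close> _ \<open>Cd \<ge> 0\<close>])
      (use coeff in auto)
  have "(\<Phi> t x - \<Psi> N t x)\<^sup>2 \<le> (K * \<sigma>\<^sup>2)\<^sup>2 / (real N)\<^sup>2" if "N \<ge> 1" "t \<in> {0..T}" for N t x
  proof -
    have "\<bar>\<Phi> t x - \<Psi> N t x\<bar> \<le> K * \<sigma>\<^sup>2 / real N"
      using K[OF _ Psi[OF \<open>N \<ge> 1\<close>] \<open>t \<in> {0..T}\<close>, of x] by simp
    from power_mono[OF this abs_ge_zero, of 2] show ?thesis by (simp add: power_divide)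
  qed
  then show ?thesis
    by (intro exI[of _ "(K * \<sigma>\<^sup>2)\<^sup>2"] allI impI nn_integral_SUP_le_const) auto
qed

end
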